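(* Let $n_0\ge1$ and $n_1=2n_0$. For $\ell\in\{0,1\}$ let $\mathbf{h}^\ell_k\in\mathbb{R}^{n_\ell}$, $k=0,\dots,n_\ell-1$, have entries $(\mathbf{h}^\ell_k)_j=\cos\frac{2(j+\frac12)k\pi}{n_\ell}+\sin\frac{2(j+\frac12)k\pi}{n_\ell}$. Let $\mathbf{P}\in\mathbb{R}^{n_1\times n_0}$ with $\mathbf{P}_{2j,j}=\mathbf{P}_{2j+1,j}=1$ ($j=0,\dots,n_0-1$) and all other entries $0$, let $\mathbf{R}=\mathbf{P}^\top$, and let $\mathbf{S}_1\in\mathbb{R}^{n_1\times n_1}$ be the periodic second-order Shapiro filter, $(\mathbf{S}_1\mathbf{x})_j=\frac14(x_{j-1}+2x_j+x_{j+1})$ with indices taken modulo $n_1$. Set $\bar{\mathbf{P}}:=\mathbf{S}_1\mathbf{P}$, $\bar{\mathbf{R}}:=\mathbf{R}\mathbf{S}_1$ and $c_k:=\cos(k\pi/n_1)$. Then for all $k=0,\dots,n_0-1$: $\bar{\mathbf{P}}\mathbf{h}^0_k=c_k^3\mathbf{h}^1_k-c_{n_0+k}^3\mathbf{h}^1_{n_0+k}$, $\bar{\mathbf{R}}\mathbf{h}^1_k=2c_k^3\mathbf{h}^0_k$, and $\bar{\mathbf{R}}\mathbf{h}^1_{n_0+k}=-2c_{n_0+k}^3\mathbf{h}^0_k$.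
   Context: Indices start at $0$. *)

theory Defs
  imports Complex_Main
begin

text \<open>Vectors in R^m are represented as functions nat => real (entries with index < m matter);
  m x n matrices as functions nat => nat => real (entries (i,j) with i < m, j < n matter).\<close>

definition mat_vec :: "nat \<Rightarrow> (nat \<Rightarrow> nat \<Rightarrow> real) \<Rightarrow> (nat \<Rightarrow> real) \<Rightarrow> (nat \<Rightarrow> real)" where
  "mat_vec n A x = (\<lambda>i. \<Sum>j<n. A i j * x j)"

definition mat_mul :: "nat \<Rightarrow> (nat \<Rightarrow> nat \<Rightarrow> real) \<Rightarrow> (nat \<Rightarrow> nat \<Rightarrow> real) \<Rightarrow> (nat \<Rightarrow> nat \<Rightarrow> real)" where
  "mat_mul n A B = (\<lambda>i k. \<Sum>j<n. A i j * B j k)"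

definition transp_mat :: "(nat \<Rightarrow> nat \<Rightarrow> real) \<Rightarrow> (nat \<Rightarrow> nat \<Rightarrow> real)" where
  "transp_mat A = (\<lambda>i j. A j i)"

definition hvec :: "nat \<Rightarrow> nat \<Rightarrow> (nat \<Rightarrow> real)" where
  "hvec m k = (\<lambda>j. cos (2 * (real j + 1/2) * real k * pi / real m)
                  + sin (2 * (real j + 1/2) * real k * pi / real m))"

definition prolong :: "nat \<Rightarrow> nat \<Rightarrow> real" where
  "prolong i j = (if i = 2 * j \<or> i = 2 * j + 1 then 1 else 0)"

definition shapiro :: "nat \<Rightarrow> nat \<Rightarrow> nat \<Rightarrow> real" where
  "shapiro m i j = (1/4) * (if j = (i + m - 1) mod m then 1 else 0)
                 + (1/2) * (if j = i mod m then 1 else 0)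
                 + (1/4) * (if j = (i + 1) mod m then 1 else 0)"

end

theory Submission
  imports Defs
begin

(* The vectors h^l_k sample cas x = cos x + sin x at cell midpoints: h^l_k(j) = cas (theta (2j + 1))
   with theta = k pi / n_l.  The Shapiro filter is a symmetric three-point stencil, so by
   cas (x - d) + cas (x + d) = 2 cos d cas x it multiplies such a wave by (1 + cos 2 theta) / 2,
   i.e. by cos^2 theta.  Injecting a coarse wave of frequency 2 theta gives the combination
   cos theta * (fine wave of frequency theta) - cos (theta + pi/2) * (fine wave of frequency
   theta + pi/2), which are h^1_k and h^1_{n0+k}; summing neighbouring pairs multiplies a fine wave
   by 2 cos theta, and h^0_{n0+k} aliases to -h^0_k. *)

definition cas :: "real \<Rightarrow> real" where
  "cas x = cos x + sin x"

lemma cas_add_pi_mult: "cas (x + real q * pi) = (-1) ^ q * cas x"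
  by (simp add: cas_def cos_add sin_add algebra_simps)

lemma cas_diff_add: "cas (x - d) + cas (x + d) = 2 * cos d * cas x"
  by (simp add: cas_def cos_add cos_diff sin_add sin_diff algebra_simps)

lemma hvec_eq_cas: "hvec m k j = cas (real k * pi / real m * (2 * real j + 1))"
proof -
  have "2 * (real j + 1/2) * real k * pi / real m = real k * pi / real m * (2 * real j + 1)"
    by (cases "m = 0") (simp_all add: field_simps)
  then show ?thesis
    by (simp only: hvec_def cas_def)
qed

lemma hvec_add_period:
  assumes "0 < m"
  shows "hvec m k (j + m * q) = hvec m k j"
proof -
  have "real k * pi / real m * (2 * real (j + m * q) + 1)
      = real k * pi / real m * (2 * real j + 1) + real (2 * k * q) * pi"
    using assms by (simp add: field_simps)
  then show ?thesis
    by (simp only: hvec_eq_cas cas_add_pi_mult) simp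
qed

lemma hvec_mod:
  assumes "0 < m"
  shows "hvec m k (j mod m) = hvec m k j"
  using hvec_add_period[OF assms, of k "j mod m" "j div m"] by simp

lemma hvec_add_freq:
  assumes "0 < m"
  shows "hvec m (m + k) j = - hvec m k j"
proof -
  have "real (m + k) * pi / real m * (2 * real j + 1)
      = real k * pi / real m * (2 * real j + 1) + real (2 * j + 1) * pi"
    using assms by (simp add: field_simps)
  then show ?thesis
    by (simp only: hvec_eq_cas cas_add_pi_mult) simp
qed

lemma hvec_pair_sum:
  "hvec (2 * n) l (2 * i) + hvec (2 * n) l (2 * i + 1)
     = 2 * cos (real l * pi / real (2 * n)) * hvec n l i"
proof -
  define \<theta> where "\<theta> = real l * pi / real (2 * n)"
  have "\<theta> * (2 * real (2 * i) + 1) = \<theta> * (4 * real i + 2) - \<theta>"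
       "\<theta> * (2 * real (2 * i + 1) + 1) = \<theta> * (4 * real i + 2) + \<theta>"
    by (simp_all add: algebra_simps)
  then have "hvec (2 * n) l (2 * i) + hvec (2 * n) l (2 * i + 1)
      = cas (\<theta> * (4 * real i + 2) - \<theta>) + cas (\<theta> * (4 * real i + 2) + \<theta>)"
    unfolding hvec_eq_cas \<theta>_def by simp
  also have "\<dots> = 2 * cos \<theta> * cas (\<theta> * (4 * real i + 2))"
    by (simp only: cas_diff_add mult.commute)
  also have "\<theta> * (4 * real i + 2) = real l * pi / real n * (2 * real i + 1)"
    by (cases "n = 0") (simp_all add: \<theta>_def field_simps)
  finally show ?thesis
    unfolding hvec_eq_cas \<theta>_def .
qed

lemma hvec_div2_split:
  assumes "0 < n"
  shows "hvec n k (j div 2) = cos (real k * pi / real (2 * n)) * hvec (2 * n) k j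
           - cos (real (n + k) * pi / real (2 * n)) * hvec (2 * n) (n + k) j"
proof -
  define a where "a = real k * pi / real (2 * n)"
  define x where "x = a * (2 * real j + 1)"
  have freq: "real k * pi / real n = 2 * a" "real (n + k) * pi / real (2 * n) = a + pi / 2"
    using assms by (simp_all add: a_def field_simps)
  have low: "hvec (2 * n) k j = cos x + sin x"
    by (simp add: hvec_eq_cas cas_def x_def a_def)
  have "(a + pi / 2) * (2 * real j + 1) = (x + pi / 2) + real j * pi"
    by (simp add: x_def algebra_simps)
  moreover have "cas (x + pi / 2) = cos x - sin x"
    by (simp add: cas_def cos_add sin_add)
  ultimately have high: "hvec (2 * n) (n + k) j = (-1) ^ j * (cos x - sin x)"
    by (simp only: hvec_eq_cas freq cas_add_pi_mult)
  have "cos (real (n + k) * pi / real (2 * n)) = - sin a"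
    unfolding freq by (simp add: cos_add)
  then have rhs: "cos (real k * pi / real (2 * n)) * hvec (2 * n) k j
        - cos (real (n + k) * pi / real (2 * n)) * hvec (2 * n) (n + k) j
      = cos a * (cos x + sin x) + (-1) ^ j * sin a * (cos x - sin x)"
    unfolding a_def[symmetric] low high by simp
  show ?thesis
  proof (cases "even j")
    case True
    then have "2 * a * (2 * real (j div 2) + 1) = x + a"
      by (auto simp: x_def algebra_simps elim: evenE)
    then have "hvec n k (j div 2) = cas (x + a)"
      by (simp only: hvec_eq_cas freq)
    then show ?thesis
      unfolding rhs using True by (simp add: cas_def cos_add sin_add algebra_simps)
  next
    case False
    then have "2 * a * (2 * real (j div 2) + 1) = x - a"
      by (auto simp: x_def algebra_simps elim: oddE)
    then have "hvec n k (j div 2) = cas (x - a)"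
      by (simp only: hvec_eq_cas freq)
    then show ?thesis
      unfolding rhs using False by (simp add: cas_def cos_diff sin_diff algebra_simps)
  qed
qed

lemma mat_vec_mat_mul: "mat_vec n (mat_mul m A B) x = mat_vec m A (mat_vec n B x)"
  unfolding mat_vec_def mat_mul_def
  by (simp add: sum_distrib_left sum_distrib_right mult.assoc sum.swap[where A = "{..<n}"])

lemma mat_vec_cong: "(\<And>j. j < n \<Longrightarrow> x j = y j) \<Longrightarrow> mat_vec n A x = mat_vec n A y"
  unfolding mat_vec_def by simp

lemma mat_vec_lincomb:
  "mat_vec n A (\<lambda>j. a * x j - b * y j) i = a * mat_vec n A x i - b * mat_vec n A y i"
  unfolding mat_vec_def by (simp add: sum_distrib_left sum_subtractf algebra_simps)

lemma mat_vec_prolong: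
  assumes "j < 2 * n"
  shows "mat_vec n prolong x j = x (j div 2)"
proof -
  have "mat_vec n prolong x j = (\<Sum>k<n. if k = j div 2 then x k else 0)"
    unfolding mat_vec_def prolong_def by (rule sum.cong) auto
  then show ?thesis
    using assms by auto
qed

lemma mat_vec_transp_prolong:
  assumes "i < n"
  shows "mat_vec (2 * n) (transp_mat prolong) y i = y (2 * i) + y (2 * i + 1)"
proof -
  have "mat_vec (2 * n) (transp_mat prolong) y i
      = (\<Sum>j<2 * n. (if j = 2 * i then y j else 0) + (if j = 2 * i + 1 then y j else 0))"
    unfolding mat_vec_def transp_mat_def prolong_def by (rule sum.cong) auto
  then show ?thesis
    using assms by (simp add: sum.distrib)
qed

lemma mat_vec_shapiro:
  assumes "i < m"
  shows "mat_vec m (shapiro m) y i = (y ((i + m - 1) mod m) + 2 * y i + y ((i + 1) mod m)) / 4"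
proof -
  have "mat_vec m (shapiro m) y i
      = (\<Sum>j<m. (if j = (i + m - 1) mod m then y j / 4 else 0)
                 + (if j = i then y j / 2 else 0) + (if j = (i + 1) mod m then y j / 4 else 0))"
    unfolding mat_vec_def shapiro_def using assms by (intro sum.cong) auto
  then show ?thesis
    using assms by (simp add: sum.distrib)
qed

lemma mat_vec_shapiro_hvec:
  assumes "0 < m" "i < m"
  shows "mat_vec m (shapiro m) (hvec m k) i = cos (real k * pi / real m) ^ 2 * hvec m k i"
proof -
  define \<theta> where "\<theta> = real k * pi / real m"
  define x where "x = \<theta> * (2 * real i + 1)"
  have "\<theta> * (2 * real (i + m - 1) + 1) = (x - 2 * \<theta>) + real (2 * k) * pi"
    using assms by (simp add: \<theta>_def x_def of_nat_diff field_simps)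
  then have left: "hvec m k (i + m - 1) = cas (x - 2 * \<theta>)"
    by (simp only: hvec_eq_cas \<theta>_def[symmetric] cas_add_pi_mult) simp
  have "\<theta> * (2 * real (i + 1) + 1) = x + 2 * \<theta>"
    by (simp add: x_def algebra_simps)
  then have right: "hvec m k (i + 1) = cas (x + 2 * \<theta>)"
    by (simp only: hvec_eq_cas \<theta>_def[symmetric])
  have "mat_vec m (shapiro m) (hvec m k) i = (hvec m k (i + m - 1) + 2 * hvec m k i + hvec m k (i + 1)) / 4"
    by (simp only: mat_vec_shapiro[OF assms(2)] hvec_mod[OF assms(1)])
  also have "\<dots> = (cas (x - 2 * \<theta>) + cas (x + 2 * \<theta>) + 2 * cas x) / 4"
    by (simp only: left right) (simp add: hvec_eq_cas \<theta>_def[symmetric] x_def[symmetric])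
  also have "\<dots> = (1 + cos (2 * \<theta>)) / 2 * cas x"
    by (simp add: cas_diff_add field_simps)
  also have "\<dots> = cos \<theta> ^ 2 * cas x"
    by (simp add: cos_double_cos)
  finally show ?thesis
    unfolding \<theta>_def x_def hvec_eq_cas .
qed

lemma smoothed_prolong_hvec:
  assumes "0 < n" "i < 2 * n"
  shows "mat_vec n (mat_mul (2 * n) (shapiro (2 * n)) prolong) (hvec n k) i
       = cos (real k * pi / real (2 * n)) ^ 3 * hvec (2 * n) k i
         - cos (real (n + k) * pi / real (2 * n)) ^ 3 * hvec (2 * n) (n + k) i"
proof -
  let ?c = "\<lambda>l. cos (real l * pi / real (2 * n))"
  have "mat_vec n prolong (hvec n k) j = ?c k * hvec (2 * n) k j - ?c (n + k) * hvec (2 * n) (n + k) j"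
    if "j < 2 * n" for j
    using that assms(1) by (simp add: mat_vec_prolong hvec_div2_split)
  then have "mat_vec n (mat_mul (2 * n) (shapiro (2 * n)) prolong) (hvec n k) i
      = ?c k * mat_vec (2 * n) (shapiro (2 * n)) (hvec (2 * n) k) i
        - ?c (n + k) * mat_vec (2 * n) (shapiro (2 * n)) (hvec (2 * n) (n + k)) i"
    by (simp add: mat_vec_mat_mul mat_vec_lincomb cong: mat_vec_cong)
  then show ?thesis
    using assms by (simp add: mat_vec_shapiro_hvec power3_eq_cube power2_eq_square)
qed

lemma smoothed_restrict_hvec:
  assumes "0 < n" "i < n"
  shows "mat_vec (2 * n) (mat_mul (2 * n) (transp_mat prolong) (shapiro (2 * n))) (hvec (2 * n) l) i
       = 2 * cos (real l * pi / real (2 * n)) ^ 3 * hvec n l i"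
proof -
  have "2 * i < 2 * n" "2 * i + 1 < 2 * n"
    using assms(2) by simp_all
  then have "mat_vec (2 * n) (mat_mul (2 * n) (transp_mat prolong) (shapiro (2 * n))) (hvec (2 * n) l) i
      = cos (real l * pi / real (2 * n)) ^ 2 * (hvec (2 * n) l (2 * i) + hvec (2 * n) l (2 * i + 1))"
    using assms by (simp add: mat_vec_mat_mul mat_vec_transp_prolong mat_vec_shapiro_hvec distrib_left)
  then show ?thesis
    unfolding hvec_pair_sum by (simp add: power3_eq_cube power2_eq_square)
qed

theorem mainTheorem11:
  fixes n0 n1 :: nat
  assumes "n0 \<ge> 1" and "n1 = 2 * n0"
  defines "Pbar \<equiv> mat_mul n1 (shapiro n1) prolong"
      and "Rbar \<equiv> mat_mul n1 (transp_mat prolong) (shapiro n1)"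
      and "c \<equiv> (\<lambda>k::nat. cos (real k * pi / real n1))"
  shows "\<forall>k<n0.
           (\<forall>i<n1. mat_vec n0 Pbar (hvec n0 k) i
                    = (c k)^3 * hvec n1 k i - (c (n0 + k))^3 * hvec n1 (n0 + k) i)
         \<and> (\<forall>i<n0. mat_vec n1 Rbar (hvec n1 k) i = 2 * (c k)^3 * hvec n0 k i)
         \<and> (\<forall>i<n0. mat_vec n1 Rbar (hvec n1 (n0 + k)) i = - 2 * (c (n0 + k))^3 * hvec n0 k i)"
proof -
  have "0 < n0"
    using assms(1) by simp
  then show ?thesis
    unfolding Pbar_def Rbar_def c_def assms(2)
    by (simp add: smoothed_prolong_hvec smoothed_restrict_hvec hvec_add_freq)
qed

end
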